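(* For every $n\in\mathbb{N}$ and $\xi>0$ there is an interior point fingerprinting code for $n$ users with completeness error $\gamma=0$ and soundness error $\xi$ on a totally ordered domain $X_n$ of size $|X_n|\le\mathrm{tower}^{(n+\log^*(2n^2/\xi))}(1)$.
   Context: $\mathrm{tower}^{(0)}(x)=x$ and $\mathrm{tower}^{(k)}(x)=2^{\mathrm{tower}^{(k-1)}(x)}$; $\log^*$ is the iterated base-2 logarithm. An interior point fingerprinting code over a totally ordered $X$ for $n$ users is a pair of randomized algorithms $(\mathrm{Gen},\mathrm{Trace})$, possibly sharing state: $\mathrm{Gen}$ samples a codebook $C=(x_1,\dots,x_n)\in X^n$; $\mathrm{Trace}(x)$ outputs a user $i\in\{1,\dots,n\}$ or $\bot$. For a coalition $T\subseteq\{1,\dots,n\}$ and pirate algorithm $\mathcal{A}:X^{|T|}\to X$ given $C|_T=(x_i)_{i\in T}$, the output $x=\mathcal{A}(C|_T)$ is feasible if $\min_{i\in T}x_i\le x\le\max_{i\in T}x_i$. Completeness error $\gamma$ and soundness error $\xi$ mean: for all $T$ and all $\mathcal{A}$, $\Pr[\mathrm{Trace}(x)=\bot\wedge x\text{ feasible}]\le\gamma$ and $\Pr[\mathrm{Trace}(x)\in\{1,\dots,n\}\setminus T]\le\xi$, over the coins of $\mathrm{Gen},\mathrm{Trace},\mathcal{A}$. *)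

theory Defs
  imports "HOL-Probability.Probability_Mass_Function"
begin

fun tower :: "nat \<Rightarrow> nat \<Rightarrow> nat" where
  "tower 0 x = x"
| "tower (Suc k) x = 2 ^ tower k x"

definition log_star :: "real \<Rightarrow> nat" where
  "log_star x = (LEAST k. ((\<lambda>y. log 2 y) ^^ k) x \<le> 1)"

text \<open>Domain X = {..<N} (a totally ordered set of size N), users {1..n}.
  Gen is a joint distribution on (shared state, codebook); the codebook is C i for i in {1..n}.
  Trace s x is a randomized output: None = bottom, Some i = user i.
  The pirate A sees only the restriction of C to T (other entries zeroed out).\<close>

definition restr :: "(nat \<Rightarrow> nat) \<Rightarrow> nat set \<Rightarrow> nat \<Rightarrow> nat" where
  "restr C T = (\<lambda>i. if i \<in> T then C i else 0)"

definition feasible :: "(nat \<Rightarrow> nat) \<Rightarrow> nat set \<Rightarrow> nat \<Rightarrow> bool" where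
  "feasible C T x \<longleftrightarrow> (\<exists>i\<in>T. C i \<le> x) \<and> (\<exists>j\<in>T. x \<le> C j)"

definition ipfc_experiment ::
  "('s \<times> (nat \<Rightarrow> nat)) pmf \<Rightarrow> ('s \<Rightarrow> nat \<Rightarrow> nat option pmf) \<Rightarrow> nat set
   \<Rightarrow> ((nat \<Rightarrow> nat) \<Rightarrow> nat pmf) \<Rightarrow> ((nat \<Rightarrow> nat) \<times> nat \<times> nat option) pmf" where
  "ipfc_experiment Gen Trace T A =
     bind_pmf Gen (\<lambda>(s, C).
     bind_pmf (A (restr C T)) (\<lambda>x.
     bind_pmf (Trace s x) (\<lambda>t. return_pmf (C, x, t))))"

definition is_ipfc ::
  "nat \<Rightarrow> nat \<Rightarrow> real \<Rightarrow> real \<Rightarrow> ('s \<times> (nat \<Rightarrow> nat)) pmf \<Rightarrow> ('s \<Rightarrow> nat \<Rightarrow> nat option pmf) \<Rightarrow> bool" where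
  "is_ipfc n N \<gamma> \<xi> Gen Trace \<longleftrightarrow>
     (\<forall>(s, C) \<in> set_pmf Gen. \<forall>i\<in>{1..n}. C i < N) \<and>
     (\<forall>s x. set_pmf (Trace s x) \<subseteq> insert None (Some ` {1..n})) \<and>
     (\<forall>T A. T \<subseteq> {1..n} \<and> (\<forall>c. set_pmf (A c) \<subseteq> {..<N}) \<longrightarrow>
        measure_pmf.prob (ipfc_experiment Gen Trace T A)
           {(C, x, t). t = None \<and> feasible C T x} \<le> \<gamma> \<and>
        measure_pmf.prob (ipfc_experiment Gen Trace T A)
           {(C, x, t). \<exists>i. t = Some i \<and> i \<in> {1..n} - T} \<le> \<xi>)"

end

theory Submission
  imports Defs
begin

text \<open>
  The code is built by induction on the number of users. Given a code for \<open>m\<close> users, draw a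
  uniformly random leaf \<open>r\<close> of a complete binary tree whose depth exceeds the old domain by
  \<open>2^e - 1\<close>; the new user receives \<open>r\<close>, and old user \<open>i\<close> with codeword \<open>y\<^sub>i\<close> receives the leaf
  that leaves the root-to-\<open>r\<close> path at depth \<open>y\<^sub>i\<close>. An answer \<open>x\<close> is traced by the depth \<open>z\<close> at
  which its path leaves that of \<open>r\<close>: a feasible answer leaves no earlier than some codeword, so
  either \<open>z\<close> lies deeper than all old codewords plus \<open>2^e - 1\<close> levels and the new user is
  accused, or \<open>z\<close> is a feasible answer for the old code and the recursion continues. A coalition
  without the new user only knows \<open>r\<close> down to the deepest of its own codewords and has to guess
  \<open>2^e - 1\<close> more of its bits to frame the new user, so every level adds soundness error
  \<open>2^-(2^e-1)\<close>. Each level raises the domain size to a power of two, giving a tower of height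
  \<open>n\<close> on top of a constant chosen from \<open>log\<^sup>* (2n\<^sup>2/\<xi>)\<close>.
\<close>

section \<open>Binary expansions\<close>

lemma div_pow2_eq_mono:
  fixes x r :: nat
  assumes "x div 2^a = r div 2^a" "a \<le> b"
  shows "x div 2^b = r div 2^b"
proof -
  have "2^b = (2::nat)^a * 2^(b-a)" using assms(2) by (simp add: power_add[symmetric])
  then show ?thesis using assms(1) by (simp add: div_mult2_eq)
qed

lemma ex_div_pow2_eq: "\<exists>j. (x::nat) div 2^j = r div 2^j"
proof -
  have "x < 2^(x+r)" "r < 2^(x+r)"
    using less_exp[of "x+r"] by linarith+
  then have "x div 2^(x+r) = 0" "r div 2^(x+r) = 0" by (simp_all only: div_less)
  then show ?thesis by metis
qed

text \<open>In a complete binary tree of depth \<open>D\<close> with leaves \<open>{..<2^D}\<close>, the path to \<open>x\<close> leaves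
  the path to \<open>r\<close> at depth \<open>D - diverge r x\<close>.\<close>

definition diverge :: "nat \<Rightarrow> nat \<Rightarrow> nat" where
  "diverge r x = (LEAST j. x div 2^j = r div 2^j)"

lemma diverge_le_iff: "diverge r x \<le> j \<longleftrightarrow> x div 2^j = r div 2^j"
proof
  assume "diverge r x \<le> j"
  moreover have "x div 2^diverge r x = r div 2^diverge r x"
    unfolding diverge_def by (rule LeastI_ex[OF ex_div_pow2_eq])
  ultimately show "x div 2^j = r div 2^j" using div_pow2_eq_mono by blast
next
  assume "x div 2^j = r div 2^j"
  then show "diverge r x \<le> j" unfolding diverge_def by (rule Least_le)
qed

lemma diverge_self: "diverge r r = 0"
  using diverge_le_iff[of r r 0] by simp

lemma diverge_le_max:
  fixes a b x :: nat
  assumes "a \<le> x" "x \<le> b"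
  shows "diverge r x \<le> max (diverge r a) (diverge r b)"
proof -
  define L where "L = max (diverge r a) (diverge r b)"
  have "a div 2^L = r div 2^L" "b div 2^L = r div 2^L"
    using diverge_le_iff unfolding L_def by fastforce+
  moreover have "a div 2^L \<le> x div 2^L" "x div 2^L \<le> b div 2^L"
    using assms by (auto intro: div_le_mono)
  ultimately have "x div 2^L = r div 2^L" by linarith
  then show ?thesis unfolding L_def[symmetric] using diverge_le_iff by blast
qed

text \<open>The leftmost leaf leaving the path to \<open>r\<close> at depth \<open>y\<close>: keep the bits of \<open>r\<close> above
  position \<open>D - 1 - y\<close>, flip that bit and clear the ones below.\<close>

definition branch_off :: "nat \<Rightarrow> nat \<Rightarrow> nat \<Rightarrow> nat" where
  "branch_off D r y =
     (let j = D - 1 - y in r div 2^(j+1) * 2^(j+1) + (1 - r div 2^j mod 2) * 2^j)"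

lemma branch_off_div:
  assumes "j = D - 1 - y"
  shows "branch_off D r y div 2^(j+1) = r div 2^(j+1)"
    and "branch_off D r y div 2^j \<noteq> r div 2^j"
proof -
  have b: "(1 - r div 2^j mod 2) * 2^j < (2::nat)^(j+1)" by auto
  show "branch_off D r y div 2^(j+1) = r div 2^(j+1)"
    unfolding branch_off_def Let_def assms[symmetric] using b
    by (simp add: div_add1_eq[of "r div 2 ^ (j + 1) * 2 ^ (j + 1)"] del: power_Suc)
  have "branch_off D r y div 2^j = 2 * (r div 2^(j+1)) + (1 - r div 2^j mod 2)"
    unfolding branch_off_def Let_def assms[symmetric]
    by (simp add: mult.commute mult.left_commute)
  moreover have "r div 2^(j+1) = r div 2^j div 2"
    by (simp only: power_add power_one_right div_mult2_eq)
  then have "r div 2^j = 2 * (r div 2^(j+1)) + r div 2^j mod 2" by simp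
  ultimately show "branch_off D r y div 2^j \<noteq> r div 2^j"
    by (metis add_left_cancel mod2_eq_if diff_zero diff_self_eq_0 one_neq_zero)
qed

lemma diverge_branch_off:
  assumes "y < D"
  shows "diverge r (branch_off D r y) = D - y"
proof -
  define j where "j = D - 1 - y"
  have "diverge r (branch_off D r y) \<le> j + 1"
    using branch_off_div(1)[OF j_def] diverge_le_iff by blast
  moreover have "\<not> diverge r (branch_off D r y) \<le> j"
    using branch_off_div(2)[OF j_def] diverge_le_iff by blast
  ultimately show ?thesis using assms j_def by linarith
qed

lemma branch_off_less:
  assumes "y < D" "r < 2^D"
  shows "branch_off D r y < 2^D"
proof -
  have "branch_off D r y div 2^(D-1-y+1) = r div 2^(D-1-y+1)" by (rule branch_off_div(1)) (rule refl)
  moreover have "D-1-y+1 \<le> D" using assms(1) by linarith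
  ultimately have "branch_off D r y div 2^D = r div 2^D" by (rule div_pow2_eq_mono)
  then show ?thesis using assms(2) by (simp add: div_eq_0_iff)
qed

lemma branch_off_cong:
  assumes "J \<le> D - 1 - y" "r div 2^J = r' div 2^J"
  shows "branch_off D r y = branch_off D r' y"
proof -
  define j where "j = D - 1 - y"
  have "r div 2^j = r' div 2^j" "r div 2^(j+1) = r' div 2^(j+1)"
    using div_pow2_eq_mono[OF assms(2), of j] div_pow2_eq_mono[OF assms(2), of "j+1"] assms(1) j_def
    by auto
  then show ?thesis unfolding branch_off_def Let_def j_def[symmetric] by simp
qed


section \<open>The recursive code\<close>

text \<open>Codewords are multiples of \<open>2^e\<close>, so an answer at most \<open>2^e - 1\<close> above the largest
  codeword still rescales into the convex hull; this absorbs the \<open>2^e - 1\<close> levels by which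
  the trace may overshoot the deepest old codeword without accusing the new user.\<close>

fun code_size :: "nat \<Rightarrow> nat \<Rightarrow> nat" where
  "code_size e 0 = 1"
| "code_size e (Suc k) = 2 ^ (code_size e k + (2^e - 1) + e)"

definition tree_depth :: "nat \<Rightarrow> nat \<Rightarrow> nat" where
  "tree_depth e m = code_size e m + (2^e - 1)"

definition extend_code :: "nat \<Rightarrow> nat \<Rightarrow> (nat \<Rightarrow> nat) \<Rightarrow> nat \<Rightarrow> nat \<Rightarrow> nat" where
  "extend_code e m y r = (\<lambda>i.
     if 1 \<le> i \<and> i \<le> m then branch_off (tree_depth e m) r (y i) * 2^e
     else if i = Suc m then r * 2^e else 0)"

fun gen_code :: "nat \<Rightarrow> nat \<Rightarrow> (nat \<Rightarrow> nat) pmf" where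
  "gen_code e 0 = return_pmf (\<lambda>_. 0)"
| "gen_code e (Suc m) =
     bind_pmf (gen_code e m) (\<lambda>y. map_pmf (extend_code e m y) (pmf_of_set {..<2^tree_depth e m}))"

definition max_level :: "nat \<Rightarrow> (nat \<Rightarrow> nat) \<Rightarrow> nat" where
  "max_level m y = Max (insert 0 (y ` {1..m}))"

definition exit_depth :: "nat \<Rightarrow> nat \<Rightarrow> nat \<Rightarrow> nat \<Rightarrow> nat" where
  "exit_depth e m r x = tree_depth e m - diverge r (x div 2^e)"

fun trace_code :: "nat \<Rightarrow> nat \<Rightarrow> (nat \<Rightarrow> nat) \<Rightarrow> nat \<Rightarrow> nat option" where
  "trace_code e 0 C x = None"
| "trace_code e (Suc m) C x =
     (let r = C (Suc m) div 2^e;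
          y = (\<lambda>i. if 1 \<le> i \<and> i \<le> m then exit_depth e m r (C i) else 0);
          z = exit_depth e m r x
      in if max_level m y + (2^e - 1) < z then Some (Suc m) else trace_code e m y z)"

lemma max_level_in: "max_level m y \<in> insert 0 (y ` {1..m})"
  unfolding max_level_def by (rule Max_in) auto

lemma max_level_ge: "i \<in> {1..m} \<Longrightarrow> y i \<le> max_level m y"
  unfolding max_level_def by (intro Max_ge) auto

lemma max_level_attained:
  assumes "1 \<le> m"
  shows "\<exists>j\<in>{1..m}. max_level m y = y j"
proof -
  have "y 1 \<le> max_level m y" using assms by (intro max_level_ge) auto
  then show ?thesis using max_level_in[of m y] assms by (auto intro: bexI[of _ 1])
qed

lemma max_level_less:
  assumes "0 < N" "\<And>i. i \<in> {1..m} \<Longrightarrow> y i < N"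
  shows "max_level m y < N"
  using max_level_in[of m y] assms by (metis imageE insertE)

lemma pow2_lessThan_nonempty: "{..<(2::nat)^k} \<noteq> {}"
  by (metis lessThan_iff pos2 zero_less_power empty_iff)

lemma set_gen_code_Suc:
  "C \<in> set_pmf (gen_code e (Suc m)) \<longleftrightarrow>
   (\<exists>y r. y \<in> set_pmf (gen_code e m) \<and> r < 2^tree_depth e m \<and> C = extend_code e m y r)"
  by (auto simp: set_pmf_of_set[OF pow2_lessThan_nonempty])

lemma code_size_le_tree_depth: "code_size e m \<le> tree_depth e m"
  unfolding tree_depth_def by (rule le_add1)

lemma code_size_pos: "0 < code_size e k"
  by (cases k) auto

lemma gen_code_support:
  assumes "C \<in> set_pmf (gen_code e k)"
  shows "\<And>i. i = 0 \<or> k < i \<Longrightarrow> C i = 0"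
    and "\<And>i. i \<in> {1..k} \<Longrightarrow> C i < code_size e k"
    and "\<And>i. 2^e dvd C i"
proof -
  have "(\<forall>i. (i = 0 \<or> k < i) \<longrightarrow> C i = 0) \<and> (\<forall>i\<in>{1..k}. C i < code_size e k) \<and> (\<forall>i. 2^e dvd C i)"
    using assms
  proof (induction k arbitrary: C)
    case 0
    then show ?case by simp
  next
    case (Suc m)
    obtain y r where y: "y \<in> set_pmf (gen_code e m)" and r: "r < 2^tree_depth e m"
      and C: "C = extend_code e m y r"
      using Suc.prems set_gen_code_Suc by blast
    have size: "code_size e (Suc m) = 2^tree_depth e m * 2^e"
      by (simp add: tree_depth_def power_add)
    have less: "C i < code_size e (Suc m)" if i: "i \<in> {1..Suc m}" for i
    proof (cases "i \<le> m")
      case True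
      then have "y i < code_size e m" using Suc.IH[OF y] i by simp
      then have "y i < tree_depth e m" using code_size_le_tree_depth by (rule order_less_le_trans)
      then have "branch_off (tree_depth e m) r (y i) < 2^tree_depth e m"
        using branch_off_less r by blast
      then show ?thesis using True i unfolding size C extend_code_def by simp
    next
      case False
      then show ?thesis using i r unfolding size C extend_code_def by simp
    qed
    have zero: "C i = 0" if "i = 0 \<or> Suc m < i" for i
      using that unfolding C extend_code_def by auto
    have dvd: "2^e dvd C i" for i
      unfolding C extend_code_def by simp
    show ?case using zero less dvd by (intro conjI allI ballI impI) simp_all
  qed
  then show "\<And>i. i = 0 \<or> k < i \<Longrightarrow> C i = 0" "\<And>i. i \<in> {1..k} \<Longrightarrow> C i < code_size e k"
    "\<And>i. 2^e dvd C i" by auto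
qed

lemma max_level_gen_code_less:
  assumes "y \<in> set_pmf (gen_code e m)"
  shows "max_level m y + (2^e - 1) < tree_depth e m"
proof -
  have "max_level m y < code_size e m"
    by (rule max_level_less[OF code_size_pos gen_code_support(2)[OF assms]])
  then show ?thesis unfolding tree_depth_def by linarith
qed

lemma exit_depth_extend_code:
  assumes "y \<in> set_pmf (gen_code e m)" "i \<in> {1..Suc m}"
  shows "exit_depth e m r (extend_code e m y r i) = (if i \<le> m then y i else tree_depth e m)"
proof (cases "i \<le> m")
  case True
  then have i: "i \<in> {1..m}" using assms(2) by simp
  then have "y i < code_size e m" by (rule gen_code_support(2)[OF assms(1)])
  then have "y i < tree_depth e m" using code_size_le_tree_depth by (rule order_less_le_trans)
  moreover have "extend_code e m y r i div 2^e = branch_off (tree_depth e m) r (y i)"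
    using i by (simp add: extend_code_def)
  ultimately show ?thesis using True by (simp add: exit_depth_def diverge_branch_off)
next
  case False
  then have "extend_code e m y r i div 2^e = r" using assms(2) by (simp add: extend_code_def)
  then show ?thesis using False by (simp add: exit_depth_def diverge_self)
qed

lemma exit_depth_between:
  assumes "a div 2^e \<le> x div 2^e" "x div 2^e \<le> b div 2^e"
  shows "min (exit_depth e m r a) (exit_depth e m r b) \<le> exit_depth e m r x"
  using diverge_le_max[OF assms, of r] unfolding exit_depth_def by linarith

lemma trace_code_extend_code:
  assumes y: "y \<in> set_pmf (gen_code e m)"
  shows "trace_code e (Suc m) (extend_code e m y r) x =
    (if max_level m y + (2^e - 1) < exit_depth e m r x then Some (Suc m)
     else trace_code e m y (exit_depth e m r x))"
proof -
  have "(\<lambda>i. if 1 \<le> i \<and> i \<le> m then exit_depth e m r (extend_code e m y r i) else 0) = y"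
  proof
    fix i
    show "(if 1 \<le> i \<and> i \<le> m then exit_depth e m r (extend_code e m y r i) else 0) = y i"
    proof (cases "1 \<le> i \<and> i \<le> m")
      case True
      then show ?thesis using exit_depth_extend_code[OF y, of i r] by simp
    next
      case False
      then have "i = 0 \<or> m < i" by auto
      then have "y i = 0" by (rule gen_code_support(1)[OF y])
      then show ?thesis using False by (simp only: if_False)
    qed
  qed
  moreover have "extend_code e m y r (Suc m) div 2^e = r" by (simp add: extend_code_def)
  ultimately show ?thesis by (simp only: trace_code.simps Let_def)
qed

lemma trace_code_range: "trace_code e k C x \<in> insert None (Some ` {1..k})"
proof (induction k arbitrary: C x)
  case 0 then show ?case by simp
next
  case (Suc m)
  have "trace_code e m Y Z \<in> insert None (Some ` {1..Suc m})" for Y Z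
    using Suc.IH by fastforce
  then show ?case by (simp add: Let_def)
qed


section \<open>Completeness\<close>

lemma trace_code_complete:
  assumes "C \<in> set_pmf (gen_code e k)" "i \<in> {1..k}" "j \<in> {1..k}"
    and "C i \<le> x" "x \<le> C j + (2^e - 1)"
  shows "trace_code e k C x \<noteq> None"
  using assms
proof (induction k arbitrary: C x i j)
  case 0
  then show ?case by simp
next
  case (Suc m)
  obtain y r where y: "y \<in> set_pmf (gen_code e m)" and C: "C = extend_code e m y r"
    using Suc.prems(1) set_gen_code_Suc by blast
  define z where "z = exit_depth e m r x"
  obtain c where c: "C j = c * 2^e"
    using gen_code_support(3)[OF Suc.prems(1)] by (metis dvd_def mult.commute)
  have "(1::nat) \<le> 2^e" by simp
  then have "x < c * 2^e + 2^e" using Suc.prems(5) c by linarith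
  then have "x < Suc c * 2^e" by (simp add: add.commute)
  then have "x div 2^e < Suc c" by (rule less_mult_imp_div_less)
  then have "x div 2^e \<le> C j div 2^e" using c by simp
  moreover have "C i div 2^e \<le> x div 2^e" using Suc.prems(4) by (rule div_le_mono)
  ultimately have "min (exit_depth e m r (C i)) (exit_depth e m r (C j)) \<le> z"
    unfolding z_def by (rule exit_depth_between[rotated])
  then obtain i0 where "i0 \<in> {i, j}" "exit_depth e m r (C i0) \<le> z" by (auto simp: min_le_iff_disj)
  then have i0: "i0 \<in> {1..Suc m}" "(if i0 \<le> m then y i0 else tree_depth e m) \<le> z"
    using Suc.prems(2,3) exit_depth_extend_code[OF y, of i0 r] unfolding C by auto
  have trace: "trace_code e (Suc m) C x =
      (if max_level m y + (2^e - 1) < z then Some (Suc m) else trace_code e m y z)"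
    unfolding C z_def by (rule trace_code_extend_code[OF y])
  show ?case
  proof (cases "max_level m y + (2^e - 1) < z")
    case True
    then show ?thesis using trace by simp
  next
    case False
    then have "z < tree_depth e m" using max_level_gen_code_less[OF y] by linarith
    then have i0': "i0 \<in> {1..m}" "y i0 \<le> z" using i0 by (auto split: if_splits)
    then obtain j0 where j0: "j0 \<in> {1..m}" "max_level m y = y j0"
      using max_level_attained[of m y] by auto
    have "z \<le> y j0 + (2^e - 1)" using False j0(2) by linarith
    then have "trace_code e m y z \<noteq> None" by (rule Suc.IH[OF y i0'(1) j0(1) i0'(2)])
    then show ?thesis using trace False by simp
  qed
qed


section \<open>Soundness\<close>

lemma measure_bind_pmf_le:
  assumes "\<And>x. x \<in> set_pmf p \<Longrightarrow> measure_pmf.prob (f x) S \<le> c" "0 \<le> c"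
  shows "measure_pmf.prob (bind_pmf p f) S \<le> c"
proof -
  have "emeasure (measure_pmf (bind_pmf p f)) S = (\<integral>\<^sup>+x. emeasure (measure_pmf (f x)) S \<partial>measure_pmf p)"
    by simp
  also have "\<dots> \<le> (\<integral>\<^sup>+x. ennreal c \<partial>measure_pmf p)"
    using assms by (intro nn_integral_mono_AE)
      (auto simp: AE_measure_pmf_iff measure_pmf.emeasure_eq_measure)
  also have "\<dots> = ennreal c" by (simp add: measure_pmf.emeasure_space_1)
  finally have "ennreal (measure_pmf.prob (bind_pmf p f) S) \<le> ennreal c"
    by (simp add: measure_pmf.emeasure_eq_measure)
  then show ?thesis using assms(2) by (simp add: ennreal_le_iff)
qed

lemma measure_pmf_mono_on_support:
  assumes "S \<inter> set_pmf p \<subseteq> S'"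
  shows "measure_pmf.prob p S \<le> measure_pmf.prob p S'"
proof -
  have "measure_pmf.prob p S = measure_pmf.prob p (S \<inter> set_pmf p)" by (simp add: measure_Int_set_pmf)
  also have "\<dots> \<le> measure_pmf.prob p S'" using assms by (intro measure_pmf.finite_measure_mono) auto
  finally show ?thesis .
qed

lemma pair_pmf_of_set:
  assumes "finite A" "A \<noteq> {}" "finite B" "B \<noteq> {}"
  shows "pair_pmf (pmf_of_set A) (pmf_of_set B) = pmf_of_set (A \<times> B)"
proof (rule pmf_eqI)
  fix ab :: "'a \<times> 'b"
  obtain a b where ab: "ab = (a, b)" by (cases ab)
  have "A \<times> B \<noteq> {}" "finite (A \<times> B)" using assms by auto
  then show "pmf (pair_pmf (pmf_of_set A) (pmf_of_set B)) ab = pmf (pmf_of_set (A \<times> B)) ab"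
    unfolding ab pmf_pair using assms by (simp add: card_cartesian_product indicator_def)
qed

lemma pmf_of_set_pow2_split:
  assumes "J \<le> D"
  shows "pmf_of_set {..<(2::nat)^D} =
    map_pmf (\<lambda>(h, l). h * 2^J + l) (pair_pmf (pmf_of_set {..<2^(D-J)}) (pmf_of_set {..<2^J}))"
proof -
  let ?f = "\<lambda>(h::nat, l::nat). h * 2^J + l"
  have D: "(2::nat)^D = 2^(D-J) * 2^J" using assms by (simp add: power_add[symmetric])
  have inj: "inj_on ?f ({..<2^(D-J)} \<times> {..<2^J})"
  proof (rule inj_onI, clarsimp)
    fix h l h' l' :: nat
    assume "l < 2^J" "l' < 2^J" "h * 2^J + l = h' * 2^J + l'"
    moreover have "(h * 2^J + l) div 2^J = h" "(h' * 2^J + l') div 2^J = h'"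
      using \<open>l < 2^J\<close> \<open>l' < 2^J\<close> by simp_all
    ultimately show "h = h' \<and> l = l'" by auto
  qed
  have "?f ` ({..<2^(D-J)} \<times> {..<2^J}) \<subseteq> {..<2^D}"
  proof clarsimp
    fix h l :: nat assume h: "h < 2^(D-J)" and l: "l < 2^J"
    have "h * 2^J + l < (h+1) * 2^J" using l by simp
    also have "\<dots> \<le> 2^(D-J) * 2^J" using h by (intro mult_right_mono) auto
    finally show "h * 2^J + l < 2^D" using D by simp
  qed
  moreover have "{..<2^D} \<subseteq> ?f ` ({..<2^(D-J)} \<times> {..<2^J})"
  proof
    fix n assume n: "n \<in> {..<(2::nat)^D}"
    have "n div 2^J < 2^(D-J)" using n D by (simp add: less_mult_imp_div_less)
    moreover have "n = ?f (n div 2^J, n mod 2^J)" using div_mult_mod_eq[of n "2^J"] by simp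
    ultimately show "n \<in> ?f ` ({..<2^(D-J)} \<times> {..<2^J})" by force
  qed
  ultimately have img: "?f ` ({..<2^(D-J)} \<times> {..<2^J}) = {..<2^D}" by (rule antisym)
  have "pair_pmf (pmf_of_set {..<(2::nat)^(D-J)}) (pmf_of_set {..<(2::nat)^J}) =
        pmf_of_set ({..<2^(D-J)} \<times> {..<2^J})"
    by (rule pair_pmf_of_set) (simp_all add: pow2_lessThan_nonempty)
  moreover have "{..<(2::nat)^(D-J)} \<times> {..<(2::nat)^J} \<noteq> {}"
    using pow2_lessThan_nonempty by blast
  ultimately show ?thesis using map_pmf_of_set_inj[OF inj] img by simp
qed

lemma card_fixed_high_bits_le:
  fixes h J K c :: nat
  shows "card ({..<(2::nat)^J} \<inter> {l. (h * 2^J + l) div 2^K = c}) \<le> 2^K"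
proof -
  let ?A = "{..<(2::nat)^J} \<inter> {l. (h * 2^J + l) div 2^K = c}"
  let ?f = "\<lambda>l. (h * 2^J + l) mod 2^K"
  have "inj_on ?f ?A"
  proof (rule inj_onI)
    fix l1 l2 assume "l1 \<in> ?A" "l2 \<in> ?A" "?f l1 = ?f l2"
    then have "(h * 2^J + l1) div 2^K * 2^K + ?f l1 = (h * 2^J + l2) div 2^K * 2^K + ?f l2"
      by simp
    then show "l1 = l2" by (simp only: div_mult_mod_eq)
  qed
  moreover have "?f ` ?A \<subseteq> {..<2^K}" by auto
  ultimately have "card ?A \<le> card {..<(2::nat)^K}" by (intro card_inj_on_le) auto
  then show ?thesis by simp
qed

lemma prob_guess_high_bits_le:
  fixes F :: "nat \<Rightarrow> 'a pmf" and g :: "'a \<Rightarrow> nat"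
  assumes "J \<le> D"
  shows "measure_pmf.prob
           (bind_pmf (pmf_of_set {..<(2::nat)^D}) (\<lambda>r. map_pmf (\<lambda>x. (r, x)) (F (r div 2^J))))
           {(r, x). g x = r div 2^K} \<le> 2^K / 2^J"
proof -
  let ?p = "pmf_of_set {..<(2::nat)^(D-J)}" and ?q = "pmf_of_set {..<(2::nat)^J}"
  have "bind_pmf (pmf_of_set {..<(2::nat)^D}) (\<lambda>r. map_pmf (\<lambda>x. (r, x)) (F (r div 2^J))) =
        bind_pmf (pair_pmf ?p ?q)
          (\<lambda>hl. map_pmf (\<lambda>x. (fst hl * 2^J + snd hl, x)) (F ((fst hl * 2^J + snd hl) div 2^J)))"
    by (simp add: pmf_of_set_pow2_split[OF assms] bind_map_pmf split_def)
  also have "\<dots> = bind_pmf (pair_pmf ?p ?q)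
          (\<lambda>hl. map_pmf (\<lambda>x. (fst hl * 2^J + snd hl, x)) (F (fst hl)))"
  proof (rule bind_pmf_cong[OF refl])
    fix hl assume "hl \<in> set_pmf (pair_pmf ?p ?q)"
    then have "snd hl < 2^J" by (auto simp: set_pmf_of_set pow2_lessThan_nonempty)
    then show "map_pmf (\<lambda>x. (fst hl * 2^J + snd hl, x)) (F ((fst hl * 2^J + snd hl) div 2^J)) =
               map_pmf (\<lambda>x. (fst hl * 2^J + snd hl, x)) (F (fst hl))" by simp
  qed
  also have "\<dots> = bind_pmf ?p (\<lambda>h. bind_pmf ?q (\<lambda>l. map_pmf (\<lambda>x. (h * 2^J + l, x)) (F h)))"
    by (simp add: pair_pmf_def bind_assoc_pmf bind_return_pmf)
  also have "\<dots> = bind_pmf ?p (\<lambda>h. bind_pmf (F h) (\<lambda>x. map_pmf (\<lambda>l. (h * 2^J + l, x)) ?q))"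
    unfolding map_pmf_def by (subst bind_commute_pmf) (rule refl)
  finally have eq: "bind_pmf (pmf_of_set {..<(2::nat)^D}) (\<lambda>r. map_pmf (\<lambda>x. (r, x)) (F (r div 2^J))) =
     bind_pmf ?p (\<lambda>h. bind_pmf (F h) (\<lambda>x. map_pmf (\<lambda>l. (h * 2^J + l, x)) ?q))" .
  show ?thesis unfolding eq
  proof (intro measure_bind_pmf_le)
    fix h x
    have "measure_pmf.prob (map_pmf (\<lambda>l. (h * 2^J + l, x)) ?q) {(r, x). g x = r div 2^K}
          = measure_pmf.prob ?q {l. (h * 2^J + l) div 2^K = g x}"
      by (simp add: vimage_def eq_commute)
    also have "\<dots> = card ({..<(2::nat)^J} \<inter> {l. (h * 2^J + l) div 2^K = g x}) / card {..<(2::nat)^J}"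
      by (rule measure_pmf_of_set) (simp_all add: pow2_lessThan_nonempty)
    also have "\<dots> \<le> 2^K / 2^J"
      using card_fixed_high_bits_le[of J h K "g x"]
      by (simp add: divide_right_mono flip: of_nat_le_iff)
    finally show "measure_pmf.prob (map_pmf (\<lambda>l. (h * 2^J + l, x)) ?q) {(r, x). g x = r div 2^K}
                  \<le> 2^K / 2^J" .
  qed (simp_all add: divide_nonneg_nonneg)
qed


definition pirate_experiment ::
  "nat \<Rightarrow> nat \<Rightarrow> nat set \<Rightarrow> ((nat \<Rightarrow> nat) \<Rightarrow> nat pmf) \<Rightarrow> ((nat \<Rightarrow> nat) \<times> nat) pmf" where
  "pirate_experiment e k T A = bind_pmf (gen_code e k) (\<lambda>C. map_pmf (Pair C) (A (restr C T)))"

definition wrong_accusation :: "nat \<Rightarrow> nat \<Rightarrow> nat set \<Rightarrow> ((nat \<Rightarrow> nat) \<times> nat) set" where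
  "wrong_accusation e k T = {(C, x). trace_code e k C x \<in> Some ` ({1..k} - T)}"

definition extension_round ::
  "nat \<Rightarrow> nat \<Rightarrow> nat set \<Rightarrow> ((nat \<Rightarrow> nat) \<Rightarrow> nat pmf) \<Rightarrow> (nat \<Rightarrow> nat) \<Rightarrow> (nat \<times> nat) pmf" where
  "extension_round e m T A y =
     bind_pmf (pmf_of_set {..<2^tree_depth e m}) (\<lambda>r. map_pmf (Pair r) (A (restr (extend_code e m y r) T)))"

definition extension_experiment ::
  "nat \<Rightarrow> nat \<Rightarrow> nat set \<Rightarrow> ((nat \<Rightarrow> nat) \<Rightarrow> nat pmf) \<Rightarrow> ((nat \<Rightarrow> nat) \<times> nat \<times> nat) pmf" where
  "extension_experiment e m T A = bind_pmf (gen_code e m) (\<lambda>y. map_pmf (Pair y) (extension_round e m T A y))"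

lemma pirate_experiment_Suc:
  "pirate_experiment e (Suc m) T A =
     map_pmf (\<lambda>(y, r, x). (extend_code e m y r, x)) (extension_experiment e m T A)"
  unfolding pirate_experiment_def extension_experiment_def extension_round_def
  by (simp add: bind_assoc_pmf bind_map_pmf map_bind_pmf map_pmf_comp)

lemma restr_extend_code:
  assumes "T \<subseteq> {1..Suc m}"
  shows "restr (extend_code e m y r) T = restr (extend_code e m (restr y (T - {Suc m})) r) T"
  unfolding restr_def extend_code_def using assms by (intro ext) auto

text \<open>The new level and the pirate together form a pirate against the code for the first \<open>m\<close>
  users, which needs only the coalition's old codewords.\<close>

lemma extension_experiment_simulates_pirate:
  assumes "T \<subseteq> {1..Suc m}"
  shows "map_pmf (\<lambda>(y, r, x). (y, exit_depth e m r x)) (extension_experiment e m T A) =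
         pirate_experiment e m (T - {Suc m})
           (\<lambda>v. map_pmf (\<lambda>(r, x). exit_depth e m r x) (extension_round e m T A v))"
proof -
  have "extension_round e m T A (restr y (T - {Suc m})) = extension_round e m T A y" for y
    unfolding extension_round_def using restr_extend_code[OF assms, of e y] by simp
  then show ?thesis unfolding extension_experiment_def pirate_experiment_def
    by (simp add: map_bind_pmf map_pmf_comp case_prod_unfold)
qed

lemma restr_extend_code_high_bits:
  assumes "T \<subseteq> {1..m}" "\<And>i. i \<in> T \<Longrightarrow> J \<le> tree_depth e m - 1 - y i"
  shows "restr (extend_code e m y r) T = restr (extend_code e m y (r div 2^J * 2^J)) T"
proof
  fix i
  have "r div 2^J = (r div 2^J * 2^J) div 2^J" by simp
  then have "i \<in> T \<Longrightarrow> branch_off (tree_depth e m) r (y i) = branch_off (tree_depth e m) (r div 2^J * 2^J) (y i)"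
    using assms(2) by (rule branch_off_cong[rotated])
  then show "restr (extend_code e m y r) T i = restr (extend_code e m y (r div 2^J * 2^J)) T i"
    using assms(1) unfolding restr_def extend_code_def by auto
qed

text \<open>The coalition only sees \<open>r\<close> down to the deepest of its own codewords, i.e. the bits from
  position \<open>J = K + (2^e - 1)\<close> upwards, while framing the new user requires an answer agreeing
  with \<open>r\<close> from position \<open>K\<close> upwards.\<close>

lemma prob_extension_round_frame_le:
  assumes y: "y \<in> set_pmf (gen_code e m)" and T: "T \<subseteq> {1..m}"
  shows "measure_pmf.prob (extension_round e m T A y)
           {(r, x). max_level m y + (2^e - 1) < exit_depth e m r x} \<le> 1 / 2^(2^e - 1)"
proof -
  define D where "D = tree_depth e m"
  define E where "E = 2^e - (1::nat)"
  define M where "M = max_level m y"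
  show ?thesis
  proof (cases "M + E < D")
    case False
    then have "{(r, x). M + E < exit_depth e m r x} = {}" unfolding exit_depth_def D_def by auto
    then show ?thesis unfolding M_def E_def by simp
  next
    case True
    define K where "K = D - M - E - 1"
    define J where "J = K + E"
    have "J \<le> D" unfolding J_def K_def using True by linarith
    have "J \<le> tree_depth e m - 1 - y i" if "i \<in> T" for i
    proof -
      have "y i \<le> M" unfolding M_def using that T by (intro max_level_ge) blast
      then show ?thesis using True unfolding J_def K_def D_def by linarith
    qed
    then have view: "restr (extend_code e m y r) T = restr (extend_code e m y (r div 2^J * 2^J)) T" for r
      by (rule restr_extend_code_high_bits[OF T])
    define F where "F = (\<lambda>h. A (restr (extend_code e m y (h * 2^J)) T))"
    have "extension_round e m T A y =
          bind_pmf (pmf_of_set {..<2^D}) (\<lambda>r. map_pmf (Pair r) (F (r div 2^J)))"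
      unfolding extension_round_def F_def D_def by (intro bind_pmf_cong refl) (subst view, rule refl)
    moreover have "{(r, x). M + E < exit_depth e m r x} \<subseteq> {(r, x). x div 2^e div 2^K = r div 2^K}"
    proof clarify
      fix r x assume "M + E < exit_depth e m r x"
      then have "diverge r (x div 2^e) \<le> K" unfolding K_def exit_depth_def D_def by linarith
      then show "x div 2^e div 2^K = r div 2^K" using diverge_le_iff by blast
    qed
    ultimately have "measure_pmf.prob (extension_round e m T A y) {(r, x). M + E < exit_depth e m r x}
        \<le> measure_pmf.prob (bind_pmf (pmf_of_set {..<2^D}) (\<lambda>r. map_pmf (Pair r) (F (r div 2^J))))
            {(r, x). x div 2^e div 2^K = r div 2^K}"
      by (auto intro: measure_pmf.finite_measure_mono)
    also have "\<dots> \<le> 2^K / 2^J" by (rule prob_guess_high_bits_le[OF \<open>J \<le> D\<close>])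
    also have "\<dots> = 1 / 2^E" unfolding J_def by (simp add: power_add)
    finally show ?thesis unfolding M_def E_def .
  qed
qed

lemma prob_frame_new_user_le:
  assumes "T \<subseteq> {1..m}"
  shows "measure_pmf.prob (extension_experiment e m T A)
           {(y, r, x). max_level m y + (2^e - 1) < exit_depth e m r x} \<le> 1 / 2^(2^e - 1)"
  unfolding extension_experiment_def
proof (rule measure_bind_pmf_le)
  fix y assume y: "y \<in> set_pmf (gen_code e m)"
  have "Pair y -` {(y, r, x). max_level m y + (2^e - 1) < exit_depth e m r x} =
        {(r, x). max_level m y + (2^e - 1) < exit_depth e m r x}" by auto
  then show "measure_pmf.prob (map_pmf (Pair y) (extension_round e m T A y))
               {(y, r, x). max_level m y + (2^e - 1) < exit_depth e m r x} \<le> 1 / 2^(2^e - 1)"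
    using prob_extension_round_frame_le[OF y assms] by (simp only: measure_map_pmf)
qed simp

lemma wrong_accusation_extend_code:
  assumes "y \<in> set_pmf (gen_code e m)" "(extend_code e m y r, x) \<in> wrong_accusation e (Suc m) T"
  shows "Suc m \<notin> T \<and> max_level m y + (2^e - 1) < exit_depth e m r x \<or>
         (y, exit_depth e m r x) \<in> wrong_accusation e m (T - {Suc m})"
proof (cases "max_level m y + (2^e - 1) < exit_depth e m r x")
  case True
  then have "trace_code e (Suc m) (extend_code e m y r) x = Some (Suc m)"
    by (simp add: trace_code_extend_code[OF assms(1)] del: trace_code.simps)
  then show ?thesis using True assms(2) unfolding wrong_accusation_def by auto
next
  case False
  then have "trace_code e (Suc m) (extend_code e m y r) x = trace_code e m y (exit_depth e m r x)"
    by (simp add: trace_code_extend_code[OF assms(1)] del: trace_code.simps)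
  then have "trace_code e m y (exit_depth e m r x) \<in> Some ` ({1..Suc m} - T)"
    using assms(2) unfolding wrong_accusation_def by simp
  moreover have "trace_code e m y (exit_depth e m r x) \<in> insert None (Some ` {1..m})"
    by (rule trace_code_range)
  ultimately show ?thesis unfolding wrong_accusation_def by auto
qed

theorem prob_wrong_accusation_le:
  assumes "T \<subseteq> {1..k}"
  shows "measure_pmf.prob (pirate_experiment e k T A) (wrong_accusation e k T) \<le> real k / 2^(2^e - 1)"
  using assms
proof (induction k arbitrary: T A)
  case 0
  have "wrong_accusation e 0 T = {}" unfolding wrong_accusation_def by simp
  then show ?case by simp
next
  case (Suc m)
  have T': "T - {Suc m} \<subseteq> {1..m}"
  proof
    fix i assume "i \<in> T - {Suc m}"
    then have "i \<in> {1..Suc m}" "i \<noteq> Suc m" using Suc.prems by auto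
    then show "i \<in> {1..m}" by auto
  qed
  define Q where "Q = extension_experiment e m T A"
  define frame where "frame = {(y, r, x). Suc m \<notin> T \<and> max_level m y + (2^e - 1) < exit_depth e m r x}"
  define recurse where
    "recurse = (\<lambda>(y, r, x). (y, exit_depth e m r x)) -` wrong_accusation e m (T - {Suc m})"
  have "(\<lambda>(y, r, x). (extend_code e m y r, x)) -` wrong_accusation e (Suc m) T \<inter> set_pmf Q
        \<subseteq> frame \<union> recurse"
    using wrong_accusation_extend_code
    unfolding Q_def extension_experiment_def frame_def recurse_def by fastforce
  then have "measure_pmf.prob (pirate_experiment e (Suc m) T A) (wrong_accusation e (Suc m) T)
      \<le> measure_pmf.prob Q (frame \<union> recurse)"
    unfolding pirate_experiment_Suc Q_def[symmetric] by (simp add: measure_pmf_mono_on_support)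
  also have "\<dots> \<le> measure_pmf.prob Q frame + measure_pmf.prob Q recurse"
    by (rule measure_subadditive) (auto simp: measure_pmf.emeasure_eq_measure)
  also have "measure_pmf.prob Q frame \<le> 1 / 2^(2^e - 1)"
  proof (cases "Suc m \<in> T")
    case True
    then have "frame = {}" unfolding frame_def by simp
    then show ?thesis by simp
  next
    case False
    then have "frame = {(y, r, x). max_level m y + (2^e - 1) < exit_depth e m r x}"
      unfolding frame_def by simp
    moreover have "T \<subseteq> {1..m}" using False T' by simp
    ultimately show ?thesis unfolding Q_def by (simp only: prob_frame_new_user_le)
  qed
  also have "measure_pmf.prob Q recurse \<le> real m / 2^(2^e - 1)"
    unfolding recurse_def Q_def measure_map_pmf[symmetric]
      extension_experiment_simulates_pirate[OF Suc.prems]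
    by (rule Suc.IH[OF T'])
  finally show ?case by (simp add: add_divide_distrib[symmetric])
qed


text \<open>The shared state of \<open>Gen\<close> and \<open>Trace\<close> is a natural number, so the codebook is passed on
  through an injective encoding of its first \<open>n + 1\<close> entries.\<close>

definition encode_codebook :: "nat \<Rightarrow> (nat \<Rightarrow> nat) \<Rightarrow> nat" where
  "encode_codebook n C = to_nat (map C [0..<Suc n])"

definition decode_codebook :: "nat \<Rightarrow> nat \<Rightarrow> nat \<Rightarrow> nat" where
  "decode_codebook n s = (\<lambda>i. if i \<le> n then (from_nat s :: nat list) ! i else 0)"

lemma decode_encode_codebook: "(\<And>i. n < i \<Longrightarrow> C i = 0) \<Longrightarrow> decode_codebook n (encode_codebook n C) = C"
  unfolding decode_codebook_def encode_codebook_def by (rule ext) (auto simp: nth_map_upt simp del: upt_Suc)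

definition code_gen :: "nat \<Rightarrow> nat \<Rightarrow> (nat \<times> (nat \<Rightarrow> nat)) pmf" where
  "code_gen e n = map_pmf (\<lambda>C. (encode_codebook n C, C)) (gen_code e n)"

definition code_trace :: "nat \<Rightarrow> nat \<Rightarrow> nat \<Rightarrow> nat \<Rightarrow> nat option pmf" where
  "code_trace e n s x = return_pmf (trace_code e n (decode_codebook n s) x)"

lemma ipfc_experiment_code:
  "ipfc_experiment (code_gen e n) (code_trace e n) T A =
     map_pmf (\<lambda>(C, x). (C, x, trace_code e n C x)) (pirate_experiment e n T A)"
proof -
  have "decode_codebook n (encode_codebook n C) = C" if "C \<in> set_pmf (gen_code e n)" for C
    using gen_code_support(1)[OF that] by (intro decode_encode_codebook) blast
  then have "ipfc_experiment (code_gen e n) (code_trace e n) T A =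
        bind_pmf (gen_code e n) (\<lambda>C. bind_pmf (A (restr C T)) (\<lambda>x. return_pmf (C, x, trace_code e n C x)))"
    unfolding ipfc_experiment_def code_gen_def code_trace_def
    by (simp add: bind_map_pmf bind_return_pmf cong: bind_pmf_cong)
  then show ?thesis
    unfolding pirate_experiment_def by (simp add: map_bind_pmf map_pmf_comp map_pmf_def[symmetric])
qed

theorem is_ipfc_code: "is_ipfc n (code_size e n) 0 (real n / 2^(2^e - 1)) (code_gen e n) (code_trace e n)"
  unfolding is_ipfc_def
proof (intro conjI allI impI)
  show "\<forall>(s, C) \<in> set_pmf (code_gen e n). \<forall>i\<in>{1..n}. C i < code_size e n"
    unfolding code_gen_def using gen_code_support(2) by fastforce
  fix s x show "set_pmf (code_trace e n s x) \<subseteq> insert None (Some ` {1..n})"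
    unfolding code_trace_def using trace_code_range by simp
next
  fix T and A :: "(nat \<Rightarrow> nat) \<Rightarrow> nat pmf"
  assume "T \<subseteq> {1..n} \<and> (\<forall>c. set_pmf (A c) \<subseteq> {..<code_size e n})"
  then have T: "T \<subseteq> {1..n}" by blast
  have "trace_code e n C x \<noteq> None" if supp: "(C, x) \<in> set_pmf (pirate_experiment e n T A)" and feas: "feasible C T x" for C x
  proof -
    obtain i j where ij: "i \<in> T" "j \<in> T" "C i \<le> x" "x \<le> C j" using feas unfolding feasible_def by blast
    have "C \<in> set_pmf (gen_code e n)" using supp unfolding pirate_experiment_def by auto
    moreover have "x \<le> C j + (2^e - 1)" using ij(4) by (rule trans_le_add1)
    ultimately show ?thesis using T ij by (intro trace_code_complete[of C e n i j]) auto
  qed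
  then have "measure_pmf.prob (pirate_experiment e n T A) {(C, x). trace_code e n C x = None \<and> feasible C T x} = 0"
    unfolding measure_pmf_zero_iff by fastforce
  then show "measure_pmf.prob (ipfc_experiment (code_gen e n) (code_trace e n) T A)
      {(C, x, t). t = None \<and> feasible C T x} \<le> 0"
    unfolding ipfc_experiment_code by (simp add: vimage_def case_prod_unfold)
  have "(\<lambda>(C, x). (C, x, trace_code e n C x)) -` {(C, x, t). \<exists>i. t = Some i \<and> i \<in> {1..n} - T}
        = wrong_accusation e n T"
    unfolding wrong_accusation_def by auto
  then show "measure_pmf.prob (ipfc_experiment (code_gen e n) (code_trace e n) T A)
      {(C, x, t). \<exists>i. t = Some i \<and> i \<in> {1..n} - T} \<le> real n / 2^(2^e - 1)"
    unfolding ipfc_experiment_code measure_map_pmf using prob_wrong_accusation_le[OF T] by simp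
qed

lemma is_ipfc_mono:
  assumes "is_ipfc n N \<gamma> \<xi> Gen Trace" "\<xi> \<le> \<xi>'"
  shows "is_ipfc n N \<gamma> \<xi>' Gen Trace"
  using assms unfolding is_ipfc_def by (meson order_trans)

text \<open>Covers the parameters for which the tower bound leaves no room for the recursive code.\<close>

lemma is_ipfc_single_point:
  assumes "n = 0 \<or> 1 \<le> \<xi>" "0 \<le> \<xi>"
  shows "is_ipfc n 1 0 \<xi> (return_pmf (0::nat, \<lambda>_. 0))
           (\<lambda>s x. return_pmf (if 1 \<le> n then Some 1 else None))"
  unfolding is_ipfc_def
proof (intro conjI allI impI)
  fix T and A :: "(nat \<Rightarrow> nat) \<Rightarrow> nat pmf"
  assume "T \<subseteq> {1..n} \<and> (\<forall>c. set_pmf (A c) \<subseteq> {..<1})"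
  then have "T \<subseteq> {1..n}" by blast
  let ?P = "ipfc_experiment (return_pmf (0::nat, \<lambda>_. 0))
              (\<lambda>s x. return_pmf (if 1 \<le> n then Some 1 else None)) T A"
  have "set_pmf ?P \<subseteq> {(C, x, t). t = (if 1 \<le> n then Some 1 else None)}"
    unfolding ipfc_experiment_def by auto
  moreover have "n = 0 \<Longrightarrow> \<not> feasible C T x" for C x
    using \<open>T \<subseteq> {1..n}\<close> unfolding feasible_def by auto
  ultimately have "set_pmf ?P \<inter> {(C, x, t). t = None \<and> feasible C T x} = {}" by auto
  then show "measure_pmf.prob ?P {(C, x, t). t = None \<and> feasible C T x} \<le> 0"
    by (simp add: measure_pmf_zero_iff[symmetric])
  show "measure_pmf.prob ?P {(C, x, t). \<exists>i. t = Some i \<and> i \<in> {1..n} - T} \<le> \<xi>"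
  proof (cases "1 \<le> \<xi>")
    case True
    then show ?thesis using measure_pmf.prob_le_1 order_trans by blast
  next
    case False
    then have empty: "{(C, x, t). \<exists>i. t = Some i \<and> i \<in> {1..n} - T} = {}" using assms(1) by auto
    show ?thesis unfolding empty using assms(2) by simp
  qed
qed auto


section \<open>Size of the domain\<close>

lemma tower_Suc_one_gt: "tower k 1 < tower (Suc k) 1"
  by (simp add: less_exp)

lemma tower_one_mono: "a \<le> b \<Longrightarrow> tower a 1 \<le> tower b 1"
  by (induction b rule: dec_induct) (auto intro: order_trans less_imp_le tower_Suc_one_gt)

lemma le_tower_one: "k \<le> tower k 1"
proof (induction k)
  case (Suc k)
  then show ?case using tower_Suc_one_gt[of k] by linarith
qed simp

lemma le_tower_of_iterated_log_le:
  "((\<lambda>y. log 2 y) ^^ j) y \<le> 1 \<Longrightarrow> y \<le> real (tower j 1)"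
proof (induction j arbitrary: y)
  case 0
  then show ?case by simp
next
  case (Suc j)
  then have "log 2 y \<le> real (tower j 1)" by (simp add: funpow_Suc_right del: funpow.simps)
  show ?case
  proof (cases "y > 0")
    case True
    then have "y = 2 powr (log 2 y)" by simp
    also have "\<dots> \<le> 2 powr (real (tower j 1))" using \<open>log 2 y \<le> _\<close> by (intro powr_mono) auto
    also have "\<dots> = real (tower (Suc j) 1)" by (simp add: powr_realpow)
    finally show ?thesis .
  next
    case False
    then show ?thesis by (smt (verit) of_nat_0_le_iff)
  qed
qed

lemma iterated_log_le_one_if_le_tower:
  "0 < y \<Longrightarrow> y \<le> real (tower k 1) \<Longrightarrow> \<exists>j. ((\<lambda>y. log 2 y) ^^ j) y \<le> 1"
proof (induction k arbitrary: y)
  case 0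
  then show ?case by (intro exI[of _ 0]) simp
next
  case (Suc k)
  show ?case
  proof (cases "y \<le> 1")
    case True
    then show ?thesis by (intro exI[of _ 0]) simp
  next
    case False
    have "y \<le> 2 powr (real (tower k 1))" using Suc.prems(2) by (simp add: powr_realpow)
    then have "log 2 y \<le> real (tower k 1)" using Suc.prems(1) by (simp add: log_le_iff)
    moreover have "0 < log 2 y" using False by simp
    ultimately obtain j where "((\<lambda>y. log 2 y) ^^ j) (log 2 y) \<le> 1" using Suc.IH by blast
    then have "((\<lambda>y. log 2 y) ^^ Suc j) y \<le> 1" by (simp add: funpow_Suc_right del: funpow.simps)
    then show ?thesis by blast
  qed
qed

lemma le_tower_log_star:
  assumes "0 < y"
  shows "y \<le> real (tower (log_star y) 1)"
proof -
  have "y \<le> real (tower (nat \<lceil>y\<rceil>) 1)"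
    using le_tower_one[of "nat \<lceil>y\<rceil>"] by linarith
  then have "\<exists>j. ((\<lambda>y. log 2 y) ^^ j) y \<le> 1" by (rule iterated_log_le_one_if_le_tower[OF assms])
  then have "((\<lambda>y. log 2 y) ^^ log_star y) y \<le> 1" unfolding log_star_def by (rule LeastI_ex)
  then show ?thesis by (rule le_tower_of_iterated_log_le)
qed

lemma code_size_le_tower:
  assumes "(2^e - 1) + e + 2 \<le> tower K 1"
  shows "code_size e k + (2^e - 1) + e + 1 \<le> tower (k + K) 1"
proof (induction k)
  case 0
  then show ?case using assms by simp
next
  case (Suc k)
  define a where "a = code_size e k + (2^e - 1) + e"
  have "a + 1 \<le> tower (k + K) 1" using Suc.IH unfolding a_def .
  then have "(2::nat)^(a + 1) \<le> 2^tower (k + K) 1" by (intro power_increasing) auto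
  then have "2 * 2^a \<le> tower (Suc k + K) 1" by simp
  moreover have "(2^e - 1) + e + 1 \<le> 2^a"
    using less_exp[of a] code_size_pos[of e k] unfolding a_def by linarith
  moreover have "code_size e (Suc k) = 2^a" unfolding a_def by simp
  ultimately show ?case by linarith
qed

lemma pad_exponent_exists:
  assumes "2 \<le> K"
  shows "\<exists>e. (2^e - 1) + e + 2 \<le> tower K 1 \<and> tower K 1 \<le> 2 * 2^(2^e - 1)"
proof (cases "K = 2")
  case True
  then show ?thesis by (intro exI[of _ 1]) (simp add: numeral_eq_Suc)
next
  case False
  then obtain k where "K = 3 + k" using assms le_Suc_ex[of 3 K] by force
  then have K: "K = Suc (Suc (Suc k))" by simp
  define w where "w = tower (Suc k) 1"
  define Y where "Y = tower (Suc (Suc k)) 1"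
  have Y: "Y = 2^w" and X: "tower K 1 = 2^Y" unfolding Y_def w_def K by simp_all
  have "4 \<le> Y" unfolding Y_def using tower_one_mono[of 2 "Suc (Suc k)"] by (simp add: numeral_eq_Suc)
  have "w < Y" unfolding Y by (rule less_exp)
  have "3 * Y + 2 \<le> 2^Y" using \<open>4 \<le> Y\<close>
    by (induction Y rule: dec_induct) simp_all
  have pow: "(2::nat)^(w + 1) = 2 * Y" unfolding Y by simp
  show ?thesis
  proof (intro exI conjI)
    show "(2^(w + 1) - 1) + (w + 1) + 2 \<le> tower K 1"
      unfolding X pow using \<open>w < Y\<close> \<open>3 * Y + 2 \<le> 2^Y\<close> by linarith
    have "Y \<le> 2^(w + 1) - 1" unfolding pow using \<open>4 \<le> Y\<close> by linarith
    then have "(2::nat)^Y \<le> 2^(2^(w + 1) - 1)" by (rule power_increasing) simp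
    then show "tower K 1 \<le> 2 * 2^(2^(w + 1) - 1)" unfolding X by linarith
  qed
qed

lemma soundness_error_le:
  fixes n :: nat and \<xi> X :: real
  assumes "1 \<le> n" "0 < \<xi>" "2 * real n ^ 2 / \<xi> \<le> X" "X \<le> 2 * 2^E"
  shows "real n / 2^E \<le> \<xi>"
proof -
  have "0 < 2 * real n ^ 2 / \<xi>" using assms(1,2) by simp
  then have "0 < X" using assms(3) by linarith
  have "real n / 2^E = 2 * real n / (2 * 2^E)" by simp
  also have "\<dots> \<le> 2 * real n / X"
    using assms(4) \<open>0 < X\<close> by (intro divide_left_mono) auto
  also have "\<dots> \<le> 2 * real n ^ 2 / X"
    using assms(1) \<open>0 < X\<close> by (intro divide_right_mono) (auto simp: power2_eq_square)
  also have "\<dots> \<le> \<xi>"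
    using assms(2,3) \<open>0 < X\<close> by (simp add: pos_divide_le_eq mult.commute)
  finally show ?thesis .
qed

theorem lemmaB4:
  fixes n :: nat and \<xi> :: real
  assumes "\<xi> > 0"
  shows "\<exists>N (Gen :: (nat \<times> (nat \<Rightarrow> nat)) pmf) Trace.
           N \<le> tower (n + log_star (2 * real n ^ 2 / \<xi>)) 1 \<and>
           is_ipfc n N 0 \<xi> Gen Trace"
proof (cases "n = 0 \<or> 1 \<le> \<xi>")
  case True
  show ?thesis
    using is_ipfc_single_point[OF True] tower_one_mono[of 0] assms by (intro exI conjI) auto
next
  case False
  define K where "K = log_star (2 * real n ^ 2 / \<xi>)"
  have "1 \<le> real n ^ 2" using False by simp
  then have "\<xi> < real n ^ 2" using False by linarith
  then have "2 < 2 * real n ^ 2 / \<xi>" using assms by (simp add: less_divide_eq)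
  moreover have bound: "2 * real n ^ 2 / \<xi> \<le> tower K 1"
    unfolding K_def using calculation by (intro le_tower_log_star) simp
  ultimately have "2 \<le> K"
    using tower_one_mono[of K 1] by (cases "K \<le> 1") (auto simp: numeral_eq_Suc)
  then obtain e where e: "(2^e - 1) + e + 2 \<le> tower K 1" "tower K 1 \<le> 2 * 2^(2^e - 1)"
    using pad_exponent_exists by blast
  have "real (tower K 1) \<le> 2 * 2^(2^e - 1)"
    using of_nat_le_iff[THEN iffD2, OF e(2)] by simp
  then have "real n / 2^(2^e - 1) \<le> \<xi>"
    using False assms bound by (intro soundness_error_le[where X = "tower K 1"]) auto
  then have "is_ipfc n (code_size e n) 0 \<xi> (code_gen e n) (code_trace e n)"
    by (rule is_ipfc_mono[OF is_ipfc_code])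
  moreover have "code_size e n \<le> tower (n + K) 1" using code_size_le_tower[OF e(1), of n] by simp
  ultimately show ?thesis unfolding K_def by blast
qed

end
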